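(* Let $\delta\in(0,1)$, $\epsilon>0$, $\gamma^*\ge0$, and consider the progressive sampling algorithm PS-REG (described in the context) run on a simulation-based game with these parameters. If PS-REG returns an empirical utility function $\hat u$, then with probability at least $1-\delta$ it holds that $E(u)\subseteq E_{2\epsilon}(\hat u)$ and $E_\gamma(\hat u)\subseteq E_{2\epsilon+\gamma}(u)$ for all $0\le\gamma\le\gamma^*$, where $u$ is the true utility function.
   Context: Games. A normal-form game has a finite set of players $P$, finite pure strategy sets $S_p$, pure profile space $\mathbf{S}=\prod_pS_p$ and utility $u:\mathbf{S}\to\mathbb{R}^{|P|}$. For a profile $s$ and player $p$, $A_{p,s}$ is the set of pure profiles obtained from $s$ by replacing $p$'s strategy by any $t\in S_p$. $\mathrm{Reg}_p(s;u)=\sup_{s'\in A_{p,s}}u_p(s')-u_p(s)$, $\mathrm{Reg}(s;u)=\max_p\mathrm{Reg}_p(s;u)$; $E_\gamma(u)=\{s\in\mathbf{S}:\mathrm{Reg}(s;u)\le\gamma\}$, $E(u)=E_0(u)$. Simulation-based game: a simulator which, queried at a pure profile $s$, returns an independent random utility vector with coordinates in $[a_s,b_s]$; $c=\sup_s(b_s-a_s)$; the true utility $u(s)$ is the expected simulator output. Index set $\mathcal{I}=P\times\mathbf{S}$. Progressive sampling algorithm: schedule $m_1,\dots,m_T$, $M_t=m_1+\dots+m_t$. All indices start active. At iteration $t$, for each active $(p,s)$, draw $m_t$ fresh samples of $p$'s utility at $s$, let $\hat u^{(t)}_p(s)$ be the mean of all $M_t$ samples, and compute a deviation bound $\hat\epsilon^{(t)}_p(s)$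 with $|u_p(s)-\hat u^{(t)}_p(s)|\le\hat\epsilon^{(t)}_p(s)$ with probability at least $1-\delta/(|\mathcal{I}|T)$. Pruned indices are no longer sampled and retain their last values. After pruning, if no index is active the algorithm returns $\hat u=\hat u^{(t)}$; if the schedule is exhausted with active indices it returns nothing. PS-REG uses uniform deviation bounds (a single scalar $\hat\epsilon^{(t)}$ at iteration $t$ serving as the bound of every index). At iteration $t$ it prunes an active index $(p,s)$ if $\hat\epsilon^{(t)}\le\epsilon$ (well-estimated pruning) or if $\mathrm{Reg}_p(s;\hat u^{(t)})>\max\{2\hat\epsilon^{(t)},\ \gamma^*+\epsilon+\hat\epsilon^{(t)}\}$ (regret pruning). *)

theory Defs
  imports "HOL-Probability.Probability"
begin

text \<open>Players form a finite type 'p; Sp p is the strategy set of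
player p; a pure profile is a function 'p => 's with s p in Sp p for all p.
Utilities are functions u :: 'p => ('p => 's) => real (u p s = u_p(s)).\<close>

definition profiles :: "('p \<Rightarrow> 's set) \<Rightarrow> ('p \<Rightarrow> 's) set" where
  "profiles Sp = PiE UNIV Sp"

definition adj :: "('p \<Rightarrow> 's set) \<Rightarrow> 'p \<Rightarrow> ('p \<Rightarrow> 's) \<Rightarrow> ('p \<Rightarrow> 's) set" where
  "adj Sp p s = (\<lambda>t. s(p := t)) ` Sp p"

definition RegP :: "('p \<Rightarrow> 's set) \<Rightarrow> ('p \<Rightarrow> ('p \<Rightarrow> 's) \<Rightarrow> real) \<Rightarrow> 'p \<Rightarrow> ('p \<Rightarrow> 's) \<Rightarrow> real" where
  "RegP Sp u p s = (SUP s'\<in>adj Sp p s. u p s') - u p s"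

definition Reg :: "('p::finite \<Rightarrow> 's set) \<Rightarrow> ('p \<Rightarrow> ('p \<Rightarrow> 's) \<Rightarrow> real) \<Rightarrow> ('p \<Rightarrow> 's) \<Rightarrow> real" where
  "Reg Sp u s = Max ((\<lambda>p. RegP Sp u p s) ` UNIV)"

definition Eq :: "('p::finite \<Rightarrow> 's set) \<Rightarrow> ('p \<Rightarrow> ('p \<Rightarrow> 's) \<Rightarrow> real) \<Rightarrow> real \<Rightarrow> ('p \<Rightarrow> 's) set" where
  "Eq Sp u \<gamma> = {s \<in> profiles Sp. Reg Sp u s \<le> \<gamma>}"

definition indices :: "('p \<Rightarrow> 's set) \<Rightarrow> ('p \<times> ('p \<Rightarrow> 's)) set" where
  "indices Sp = UNIV \<times> profiles Sp"

definition Msched :: "(nat \<Rightarrow> nat) \<Rightarrow> nat \<Rightarrow> nat" where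
  "Msched m t = (\<Sum>i=1..t. m i)"

text \<open>Empirical mean of the first M_t samples of p's utility at s; X k p s is the k-th
sample drawn for index (p,s) (fresh samples at iteration t are those with
M_{t-1} <= k < M_t).\<close>
definition emp_mean :: "(nat \<Rightarrow> nat) \<Rightarrow> (nat \<Rightarrow> 'p \<Rightarrow> ('p \<Rightarrow> 's) \<Rightarrow> real) \<Rightarrow> nat \<Rightarrow> 'p \<Rightarrow> ('p \<Rightarrow> 's) \<Rightarrow> real" where
  "emp_mean m x t p s = (\<Sum>k<Msched m t. x k p s) / real (Msched m t)"

text \<open>State of PS-REG after iteration t (for one realisation of the samples x and of the
uniform deviation bounds epsh): (set of active indices, current empirical utility table).\<close>
primrec psreg_state ::
  "('p::finite \<Rightarrow> 's set) \<Rightarrow> (nat \<Rightarrow> nat) \<Rightarrow> real \<Rightarrow> real \<Rightarrow>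
   (nat \<Rightarrow> 'p \<Rightarrow> ('p \<Rightarrow> 's) \<Rightarrow> real) \<Rightarrow> (nat \<Rightarrow> real) \<Rightarrow> nat \<Rightarrow>
   ('p \<times> ('p \<Rightarrow> 's)) set \<times> ('p \<Rightarrow> ('p \<Rightarrow> 's) \<Rightarrow> real)" where
  "psreg_state Sp m \<epsilon> \<gamma>s x epsh 0 = (indices Sp, (\<lambda>_ _. 0))"
| "psreg_state Sp m \<epsilon> \<gamma>s x epsh (Suc t) =
     (let (A, uh) = psreg_state Sp m \<epsilon> \<gamma>s x epsh t;
          uh' = (\<lambda>p s. if (p, s) \<in> A then emp_mean m x (Suc t) p s else uh p s);
          e = epsh (Suc t);
          pruned = {(p, s) \<in> A. e \<le> \<epsilon> \<or>
                        RegP Sp uh' p s > max (2 * e) (\<gamma>s + \<epsilon> + e)}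
      in (A - pruned, uh'))"

definition psreg ::
  "('p::finite \<Rightarrow> 's set) \<Rightarrow> (nat \<Rightarrow> nat) \<Rightarrow> nat \<Rightarrow> real \<Rightarrow> real \<Rightarrow>
   (nat \<Rightarrow> 'p \<Rightarrow> ('p \<Rightarrow> 's) \<Rightarrow> real) \<Rightarrow> (nat \<Rightarrow> real) \<Rightarrow> ('p \<Rightarrow> ('p \<Rightarrow> 's) \<Rightarrow> real) option" where
  "psreg Sp m T \<epsilon> \<gamma>s x epsh =
     (if \<exists>t\<in>{1..T}. fst (psreg_state Sp m \<epsilon> \<gamma>s x epsh t) = {}
      then Some (snd (psreg_state Sp m \<epsilon> \<gamma>s x epsh
                   (LEAST t. t \<in> {1..T} \<and> fst (psreg_state Sp m \<epsilon> \<gamma>s x epsh t) = {})))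
      else None)"

end

theory Submission
  imports Defs
begin

text \<open>On the event where all deviation bounds computed by PS-REG are valid, which has
  probability at least \<open>1 - \<delta>\<close> by the union bound over the \<open>T |P \<times> S|\<close> deviation bounds,
  every entry of the output is reliable: it is either \<open>\<epsilon>\<close>-accurate (well-estimated pruning)
  or it was regret-pruned, in which case it lies more than \<open>\<gamma>\<^sup>* + \<epsilon>\<close> below the best
  response utility under \<open>u\<close>, and \<open>u\<close> itself has a profitable deviation there. The
  threshold \<open>max (2 e) (\<gamma>\<^sup>* + \<epsilon> + e)\<close> for a deviation bound \<open>e > \<epsilon>\<close> is what makes this
  survive the estimation error, since the neighbouring entries exceed the best response
  utility under \<open>u\<close> by at most \<open>e\<close>. Consequently the best response utilities under \<open>u\<close> and
  under the output differ by at most \<open>\<epsilon>\<close>, equilibria of \<open>u\<close> only carry accurate entries,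
  and approximate equilibria of the output with regret at most \<open>\<gamma>\<^sup>*\<close> carry no regret-pruned
  ones; both inclusions follow.\<close>

lemma (in prob_space) prob_finite_INT_ge:
  assumes "finite J" "J \<noteq> {}"
    and "\<And>j. j \<in> J \<Longrightarrow> B j \<in> events" "\<And>j. j \<in> J \<Longrightarrow> prob (B j) \<ge> 1 - \<eta>"
  shows "prob (\<Inter>j\<in>J. B j) \<ge> 1 - real (card J) * \<eta>"
proof -
  have "prob (space M - (\<Inter>j\<in>J. B j)) = prob (\<Union>j\<in>J. space M - B j)"
    using \<open>J \<noteq> {}\<close> by (auto intro!: arg_cong[where f = prob])
  also have "\<dots> \<le> (\<Sum>j\<in>J. prob (space M - B j))"
    using assms by (intro finite_measure_subadditive_finite) auto
  also have "\<dots> = (\<Sum>j\<in>J. 1 - prob (B j))"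
    using assms by (intro sum.cong refl prob_compl) auto
  also have "\<dots> \<le> real (card J) * \<eta>"
    using assms sum_mono[of J "\<lambda>j. 1 - prob (B j)" "\<lambda>_. \<eta>"] by fastforce
  finally have "prob (space M - (\<Inter>j\<in>J. B j)) \<le> real (card J) * \<eta>" .
  moreover have "(\<Inter>j\<in>J. B j) \<in> events"
    using assms by (intro sets.finite_INT) auto
  ultimately show ?thesis
    by (simp add: prob_compl)
qed

lemma (in prob_space) simultaneous_high_prob:
  assumes "finite J" "J \<noteq> {}"
    and "\<And>j. j \<in> J \<Longrightarrow> \<exists>B\<in>events. prob B \<ge> 1 - \<delta> / real (card J) \<and> (\<forall>\<omega>\<in>B. P j \<omega>)"
  shows "\<exists>G\<in>events. prob G \<ge> 1 - \<delta> \<and> (\<forall>\<omega>\<in>G. \<forall>j\<in>J. P j \<omega>)"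
proof -
  obtain B where B: "\<And>j. j \<in> J \<Longrightarrow>
      B j \<in> events \<and> prob (B j) \<ge> 1 - \<delta> / real (card J) \<and> (\<forall>\<omega>\<in>B j. P j \<omega>)"
    using assms(3) by metis
  have "prob (\<Inter>j\<in>J. B j) \<ge> 1 - real (card J) * (\<delta> / real (card J))"
    using B by (intro prob_finite_INT_ge assms) auto
  moreover have "(\<Inter>j\<in>J. B j) \<in> events"
    using assms B by (intro sets.finite_INT) auto
  ultimately show ?thesis
    using B assms by (intro bexI[of _ "\<Inter>j\<in>J. B j"]) (auto simp: card_gt_0_iff)
qed

lemma finite_indices:
  fixes Sp :: "'p::finite \<Rightarrow> 's set"
  shows "(\<And>p. finite (Sp p)) \<Longrightarrow> finite (indices Sp)"
  unfolding indices_def profiles_def by (simp add: finite_PiE)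

lemma indices_nonempty: "(\<And>p. Sp p \<noteq> {}) \<Longrightarrow> indices Sp \<noteq> {}"
  unfolding indices_def profiles_def by (simp add: PiE_eq_empty_iff)

lemma finite_adj: "finite (Sp p) \<Longrightarrow> finite (adj Sp p s)"
  unfolding adj_def by auto

lemma adj_nonempty: "Sp p \<noteq> {} \<Longrightarrow> adj Sp p s \<noteq> {}"
  unfolding adj_def by auto

lemma self_in_adj: "s \<in> profiles Sp \<Longrightarrow> s \<in> adj Sp p s"
  unfolding adj_def profiles_def by (rule image_eqI[of _ _ "s p"]) auto

lemma adj_subset_profiles: "s \<in> profiles Sp \<Longrightarrow> adj Sp p s \<subseteq> profiles Sp"
  unfolding adj_def profiles_def by (auto simp: PiE_iff)

lemma adj_eq_adj: "s' \<in> adj Sp p s \<Longrightarrow> adj Sp p s' = adj Sp p s"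
  unfolding adj_def by auto

lemma RegP_eq_Max:
  "finite (Sp p) \<Longrightarrow> Sp p \<noteq> {} \<Longrightarrow> RegP Sp f p s = Max (f p ` adj Sp p s) - f p s"
  unfolding RegP_def by (simp add: cSup_eq_Max finite_adj adj_nonempty)

lemma mem_Eq_iff:
  assumes "\<And>p. finite (Sp p)" "\<And>p. Sp p \<noteq> {}"
  shows "s \<in> Eq Sp f \<gamma> \<longleftrightarrow> s \<in> profiles Sp \<and> (\<forall>p. Max (f p ` adj Sp p s) - \<gamma> \<le> f p s)"
  unfolding Eq_def Reg_def using assms by (auto simp: RegP_eq_Max algebra_simps)

definition reliable_entry ::
  "('p \<Rightarrow> 's set) \<Rightarrow> ('p \<Rightarrow> ('p \<Rightarrow> 's) \<Rightarrow> real) \<Rightarrow> real \<Rightarrow> real \<Rightarrow>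
   ('p \<Rightarrow> ('p \<Rightarrow> 's) \<Rightarrow> real) \<Rightarrow> 'p \<Rightarrow> ('p \<Rightarrow> 's) \<Rightarrow> bool" where
  "reliable_entry Sp u \<epsilon> \<gamma>s uh p s \<longleftrightarrow>
     \<bar>uh p s - u p s\<bar> \<le> \<epsilon> \<or>
     (uh p s < Max (u p ` adj Sp p s) - \<gamma>s - \<epsilon> \<and> u p s < Max (u p ` adj Sp p s))"

lemma reliable_entry_le_Max:
  assumes "finite (Sp p)" "\<epsilon> \<ge> 0" "\<gamma>s \<ge> 0"
    and "s' \<in> adj Sp p s" "reliable_entry Sp u \<epsilon> \<gamma>s uh p s'"
  shows "uh p s' \<le> Max (u p ` adj Sp p s) + \<epsilon>"
proof -
  have "u p s' \<le> Max (u p ` adj Sp p s)"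
    using assms by (simp add: finite_adj)
  then show ?thesis
    using assms adj_eq_adj[OF \<open>s' \<in> adj Sp p s\<close>] by (auto simp: reliable_entry_def)
qed

lemma Max_adj_estimate_le:
  assumes "finite (Sp p)" "Sp p \<noteq> {}" "\<epsilon> \<ge> 0" "\<gamma>s \<ge> 0"
    and "\<And>s'. s' \<in> adj Sp p s \<Longrightarrow> reliable_entry Sp u \<epsilon> \<gamma>s uh p s'"
  shows "Max (uh p ` adj Sp p s) \<le> Max (u p ` adj Sp p s) + \<epsilon>"
  using assms reliable_entry_le_Max[of Sp p \<epsilon> \<gamma>s _ s u uh] by (simp add: finite_adj adj_nonempty)

lemma Max_adj_le_estimate:
  assumes fin: "finite (Sp p)" and ne: "Sp p \<noteq> {}"
    and rel: "\<And>s'. s' \<in> adj Sp p s \<Longrightarrow> reliable_entry Sp u \<epsilon> \<gamma>s uh p s'"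
  shows "Max (u p ` adj Sp p s) - \<epsilon> \<le> Max (uh p ` adj Sp p s)"
proof -
  have "Max (u p ` adj Sp p s) \<in> u p ` adj Sp p s"
    using fin ne by (simp add: finite_adj adj_nonempty)
  then obtain t where t: "t \<in> adj Sp p s" "u p t = Max (u p ` adj Sp p s)"
    by (metis imageE)
  then have "Max (u p ` adj Sp p s) - \<epsilon> \<le> uh p t"
    using rel[OF t(1)] adj_eq_adj[OF t(1)] by (auto simp: reliable_entry_def)
  also have "\<dots> \<le> Max (uh p ` adj Sp p s)"
    using t(1) fin by (simp add: finite_adj)
  finally show ?thesis .
qed

lemma Eq_true_subset_Eq_estimate:
  assumes fin: "\<And>p. finite (Sp p)" and ne: "\<And>p. Sp p \<noteq> {}" and "\<epsilon> \<ge> 0" "\<gamma>s \<ge> 0"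
    and rel: "\<And>p s. s \<in> profiles Sp \<Longrightarrow> reliable_entry Sp u \<epsilon> \<gamma>s uh p s"
  shows "Eq Sp u 0 \<subseteq> Eq Sp uh (2 * \<epsilon>)"
proof
  fix s assume "s \<in> Eq Sp u 0"
  then have s: "s \<in> profiles Sp" and best: "\<And>p. u p s = Max (u p ` adj Sp p s)"
    using fin ne self_in_adj[of s Sp] by (auto simp: mem_Eq_iff finite_adj intro!: antisym)
  have "Max (uh p ` adj Sp p s) - 2 * \<epsilon> \<le> uh p s" for p
  proof -
    have "\<bar>uh p s - u p s\<bar> \<le> \<epsilon>"
      using rel[OF s, of p] best[of p] by (auto simp: reliable_entry_def)
    moreover have "Max (uh p ` adj Sp p s) \<le> Max (u p ` adj Sp p s) + \<epsilon>"
      using rel adj_subset_profiles[OF s]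
      by (intro Max_adj_estimate_le[where Sp = Sp and p = p, OF fin ne \<open>\<epsilon> \<ge> 0\<close> \<open>\<gamma>s \<ge> 0\<close>]) blast
    ultimately show ?thesis
      using best[of p] by linarith
  qed
  with s show "s \<in> Eq Sp uh (2 * \<epsilon>)"
    using fin ne by (simp add: mem_Eq_iff)
qed

lemma Eq_estimate_subset_Eq_true:
  assumes fin: "\<And>p. finite (Sp p)" and ne: "\<And>p. Sp p \<noteq> {}" and "\<gamma> \<le> \<gamma>s"
    and rel: "\<And>p s. s \<in> profiles Sp \<Longrightarrow> reliable_entry Sp u \<epsilon> \<gamma>s uh p s"
  shows "Eq Sp uh \<gamma> \<subseteq> Eq Sp u (2 * \<epsilon> + \<gamma>)"
proof
  fix s assume "s \<in> Eq Sp uh \<gamma>"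
  then have s: "s \<in> profiles Sp" and approx: "\<And>p. Max (uh p ` adj Sp p s) - \<gamma> \<le> uh p s"
    using fin ne by (auto simp: mem_Eq_iff)
  have "Max (u p ` adj Sp p s) - (2 * \<epsilon> + \<gamma>) \<le> u p s" for p
  proof -
    have "Max (u p ` adj Sp p s) - \<epsilon> \<le> Max (uh p ` adj Sp p s)"
      using rel adj_subset_profiles[OF s]
      by (intro Max_adj_le_estimate[where Sp = Sp and p = p, OF fin ne]) blast
    then have "Max (u p ` adj Sp p s) - \<epsilon> - \<gamma> \<le> uh p s"
      using approx[of p] by linarith
    then show ?thesis
      using rel[OF s, of p] \<open>\<gamma> \<le> \<gamma>s\<close> by (auto simp: reliable_entry_def)
  qed
  with s show "s \<in> Eq Sp u (2 * \<epsilon> + \<gamma>)"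
    using fin ne by (simp add: mem_Eq_iff)
qed

lemma reliable_if_regret_pruned:
  assumes fin: "finite (Sp p)" and ne: "Sp p \<noteq> {}"
    and acc: "\<bar>u p s - uh p s\<bar> \<le> e"
    and upper: "\<And>s'. s' \<in> adj Sp p s \<Longrightarrow> uh p s' \<le> Max (u p ` adj Sp p s) + e"
    and pruned: "RegP Sp uh p s > max (2 * e) (\<gamma>s + \<epsilon> + e)"
  shows "reliable_entry Sp u \<epsilon> \<gamma>s uh p s"
proof -
  have "Max (uh p ` adj Sp p s) \<le> Max (u p ` adj Sp p s) + e"
    using upper fin ne by (simp add: finite_adj adj_nonempty)
  then have "uh p s < Max (u p ` adj Sp p s) + e - max (2 * e) (\<gamma>s + \<epsilon> + e)"
    using pruned fin ne by (simp add: RegP_eq_Max max_def)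
  then show ?thesis
    using acc by (auto simp: reliable_entry_def abs_le_iff)
qed

lemma reliable_after_pruning:
  assumes fin: "finite (Sp p)" and ne: "Sp p \<noteq> {}" and "\<epsilon> \<ge> 0" "\<gamma>s \<ge> 0"
    and s: "s \<in> profiles Sp"
    and inactive: "\<And>s'. s' \<in> profiles Sp \<Longrightarrow> (p, s') \<notin> A \<Longrightarrow> reliable_entry Sp u \<epsilon> \<gamma>s uh p s'"
    and active: "\<And>s'. s' \<in> profiles Sp \<Longrightarrow> (p, s') \<in> A \<Longrightarrow> \<bar>u p s' - uh p s'\<bar> \<le> e"
    and "(p, s) \<in> A"
    and pruned: "e \<le> \<epsilon> \<or> RegP Sp uh p s > max (2 * e) (\<gamma>s + \<epsilon> + e)"
  shows "reliable_entry Sp u \<epsilon> \<gamma>s uh p s"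
proof (cases "e \<le> \<epsilon>")
  case True
  then show ?thesis
    using active[OF s \<open>(p, s) \<in> A\<close>] by (auto simp: reliable_entry_def)
next
  case False
  have "uh p s' \<le> Max (u p ` adj Sp p s) + e" if s': "s' \<in> adj Sp p s" for s'
  proof (cases "(p, s') \<in> A")
    case True
    have "u p s' \<le> Max (u p ` adj Sp p s)"
      using s' fin by (simp add: finite_adj)
    then show ?thesis
      using active[OF _ True] adj_subset_profiles[OF s] s' by force
  next
    case False
    then show ?thesis
      using reliable_entry_le_Max[OF fin \<open>\<epsilon> \<ge> 0\<close> \<open>\<gamma>s \<ge> 0\<close> s'] inactive
        adj_subset_profiles[OF s] s' \<open>\<not> e \<le> \<epsilon>\<close>
      by force
  qed
  then show ?thesis
    using reliable_if_regret_pruned[where Sp = Sp and p = p and s = s and u = u and uh = uh,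
        OF fin ne active[OF s \<open>(p, s) \<in> A\<close>]] pruned False
    by simp
qed

lemma psreg_state_Suc:
  assumes "psreg_state Sp m \<epsilon> \<gamma>s x e t = (A, uh)"
  defines "uh' \<equiv> \<lambda>p s. if (p, s) \<in> A then emp_mean m x (Suc t) p s else uh p s"
  shows "psreg_state Sp m \<epsilon> \<gamma>s x e (Suc t) =
     (A - {(p, s) \<in> A. e (Suc t) \<le> \<epsilon> \<or>
            RegP Sp uh' p s > max (2 * e (Suc t)) (\<gamma>s + \<epsilon> + e (Suc t))}, uh')"
  using assms by (simp add: Let_def)

lemma psreg_state_inactive_reliable:
  fixes Sp :: "'p::finite \<Rightarrow> 's set"
  assumes fin: "\<And>p. finite (Sp p)" and ne: "\<And>p. Sp p \<noteq> {}" and "\<epsilon> \<ge> 0" "\<gamma>s \<ge> 0"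
    and dev: "\<And>t p s. t \<in> {1..T} \<Longrightarrow> s \<in> profiles Sp \<Longrightarrow>
        (p, s) \<in> fst (psreg_state Sp m \<epsilon> \<gamma>s x e (t - 1)) \<Longrightarrow>
        \<bar>u p s - emp_mean m x t p s\<bar> \<le> e t"
  shows "t \<le> T \<Longrightarrow> s \<in> profiles Sp \<Longrightarrow> (p, s) \<notin> fst (psreg_state Sp m \<epsilon> \<gamma>s x e t) \<Longrightarrow>
     reliable_entry Sp u \<epsilon> \<gamma>s (snd (psreg_state Sp m \<epsilon> \<gamma>s x e t)) p s"
proof (induction t arbitrary: p s)
  case 0
  then show ?case by (simp add: indices_def)
next
  case (Suc t)
  obtain A uh where st: "psreg_state Sp m \<epsilon> \<gamma>s x e t = (A, uh)"
    by fastforce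
  define uh' where "uh' = (\<lambda>p s. if (p, s) \<in> A then emp_mean m x (Suc t) p s else uh p s)"
  define e' where "e' = e (Suc t)"
  have step: "psreg_state Sp m \<epsilon> \<gamma>s x e (Suc t) =
     (A - {(p, s) \<in> A. e' \<le> \<epsilon> \<or> RegP Sp uh' p s > max (2 * e') (\<gamma>s + \<epsilon> + e')}, uh')"
    using psreg_state_Suc[OF st] unfolding uh'_def e'_def by simp
  have inactive: "reliable_entry Sp u \<epsilon> \<gamma>s uh' p s"
    if "s \<in> profiles Sp" "(p, s) \<notin> A" for p s
    using Suc.IH[of s p] Suc.prems(1) st that by (simp add: uh'_def reliable_entry_def)
  have active: "\<bar>u p s - uh' p s\<bar> \<le> e'" if "s \<in> profiles Sp" "(p, s) \<in> A" for p s
    using dev[of "Suc t"] Suc.prems(1) st that by (simp add: uh'_def e'_def)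
  show ?case
  proof (cases "(p, s) \<in> A")
    case False
    then show ?thesis
      using inactive[OF Suc.prems(2)] step by simp
  next
    case True
    moreover have "e' \<le> \<epsilon> \<or> RegP Sp uh' p s > max (2 * e') (\<gamma>s + \<epsilon> + e')"
      using Suc.prems(3) True step by auto
    ultimately show ?thesis
      using reliable_after_pruning[OF fin ne \<open>\<epsilon> \<ge> 0\<close> \<open>\<gamma>s \<ge> 0\<close> Suc.prems(2) inactive active] step
      by simp
  qed
qed

lemma psreg_SomeD:
  assumes "psreg Sp m T \<epsilon> \<gamma>s x e = Some uh"
  obtains t where "t \<in> {1..T}" "fst (psreg_state Sp m \<epsilon> \<gamma>s x e t) = {}"
    "uh = snd (psreg_state Sp m \<epsilon> \<gamma>s x e t)"
proof -
  let ?done = "\<lambda>t. t \<in> {1..T} \<and> fst (psreg_state Sp m \<epsilon> \<gamma>s x e t) = {}"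
  have "\<exists>t. ?done t" and uh: "uh = snd (psreg_state Sp m \<epsilon> \<gamma>s x e (LEAST t. ?done t))"
    using assms unfolding psreg_def by (auto split: if_splits)
  then show ?thesis
    using that LeastI_ex[of ?done] by blast
qed

lemma psreg_approximates_equilibria:
  fixes Sp :: "'p::finite \<Rightarrow> 's set"
  assumes fin: "\<And>p. finite (Sp p)" and ne: "\<And>p. Sp p \<noteq> {}" and "\<epsilon> \<ge> 0" "\<gamma>s \<ge> 0"
    and dev: "\<And>t p s. t \<in> {1..T} \<Longrightarrow> s \<in> profiles Sp \<Longrightarrow>
        (p, s) \<in> fst (psreg_state Sp m \<epsilon> \<gamma>s x e (t - 1)) \<Longrightarrow>
        \<bar>u p s - emp_mean m x t p s\<bar> \<le> e t"
    and out: "psreg Sp m T \<epsilon> \<gamma>s x e = Some uh"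
  shows "Eq Sp u 0 \<subseteq> Eq Sp uh (2 * \<epsilon>)"
    and "\<gamma> \<le> \<gamma>s \<Longrightarrow> Eq Sp uh \<gamma> \<subseteq> Eq Sp u (2 * \<epsilon> + \<gamma>)"
proof -
  obtain t where "t \<in> {1..T}" "fst (psreg_state Sp m \<epsilon> \<gamma>s x e t) = {}"
    "uh = snd (psreg_state Sp m \<epsilon> \<gamma>s x e t)"
    using psreg_SomeD[OF out] .
  then have rel: "\<And>p s. s \<in> profiles Sp \<Longrightarrow> reliable_entry Sp u \<epsilon> \<gamma>s uh p s"
    using psreg_state_inactive_reliable[where T = T, OF fin ne \<open>\<epsilon> \<ge> 0\<close> \<open>\<gamma>s \<ge> 0\<close> dev] by simp
  show "Eq Sp u 0 \<subseteq> Eq Sp uh (2 * \<epsilon>)"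
    by (rule Eq_true_subset_Eq_estimate[OF fin ne \<open>\<epsilon> \<ge> 0\<close> \<open>\<gamma>s \<ge> 0\<close> rel])
  show "Eq Sp uh \<gamma> \<subseteq> Eq Sp u (2 * \<epsilon> + \<gamma>)" if "\<gamma> \<le> \<gamma>s"
    by (rule Eq_estimate_subset_Eq_true[OF fin ne that rel])
qed

theorem theorem6:
  fixes M :: "'a measure"
    and Sp :: "'p::finite \<Rightarrow> 's set"
    and X :: "nat \<Rightarrow> 'p \<Rightarrow> ('p \<Rightarrow> 's) \<Rightarrow> 'a \<Rightarrow> real"
    and epsh :: "nat \<Rightarrow> 'a \<Rightarrow> real"
    and u :: "'p \<Rightarrow> ('p \<Rightarrow> 's) \<Rightarrow> real"
    and a b :: "('p \<Rightarrow> 's) \<Rightarrow> real"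
    and m :: "nat \<Rightarrow> nat" and T :: nat
    and \<delta> \<epsilon> \<gamma>s :: real
  assumes "prob_space M"
    and fin: "\<And>p. finite (Sp p)" and ne: "\<And>p. Sp p \<noteq> {}"
    and sched: "T \<ge> 1" "\<And>t. t \<in> {1..T} \<Longrightarrow> m t > 0"
    and delta: "0 < \<delta>" "\<delta> < 1" and eps: "\<epsilon> > 0" and gs: "\<gamma>s \<ge> 0"
    and rv: "\<And>k p s. X k p s \<in> borel_measurable M"
    and epsh_rv: "\<And>t. epsh t \<in> borel_measurable M"
    and bounded: "\<And>k p s \<omega>. s \<in> profiles Sp \<Longrightarrow> \<omega> \<in> space M \<Longrightarrow>
                    a s \<le> X k p s \<omega> \<and> X k p s \<omega> \<le> b s"
    and mean: "\<And>k p s. s \<in> profiles Sp \<Longrightarrow> prob_space.expectation M (X k p s) = u p s"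
    and dev: "\<And>t p s. t \<in> {1..T} \<Longrightarrow> (p, s) \<in> indices Sp \<Longrightarrow>
       \<exists>B \<in> sets M. measure M B \<ge> 1 - \<delta> / (real (card (indices Sp)) * real T) \<and>
         (\<forall>\<omega>\<in>B. (p, s) \<in> fst (psreg_state Sp m \<epsilon> \<gamma>s (\<lambda>k p s. X k p s \<omega>) (\<lambda>t. epsh t \<omega>) (t - 1))
                  \<longrightarrow> \<bar>u p s - emp_mean m (\<lambda>k p s. X k p s \<omega>) t p s\<bar> \<le> epsh t \<omega>)"
  shows "\<exists>G \<in> sets M. measure M G \<ge> 1 - \<delta> \<and>
    (\<forall>\<omega>\<in>G. \<forall>uh. psreg Sp m T \<epsilon> \<gamma>s (\<lambda>k p s. X k p s \<omega>) (\<lambda>t. epsh t \<omega>) = Some uh \<longrightarrow>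
        Eq Sp u 0 \<subseteq> Eq Sp uh (2 * \<epsilon>) \<and>
        (\<forall>\<gamma>. 0 \<le> \<gamma> \<and> \<gamma> \<le> \<gamma>s \<longrightarrow> Eq Sp uh \<gamma> \<subseteq> Eq Sp u (2 * \<epsilon> + \<gamma>)))"
proof -
  interpret prob_space M by fact
  let ?J = "{1..T} \<times> indices Sp"
  let ?dev_ok = "\<lambda>(t, p, s) \<omega>.
    (p, s) \<in> fst (psreg_state Sp m \<epsilon> \<gamma>s (\<lambda>k p s. X k p s \<omega>) (\<lambda>t. epsh t \<omega>) (t - 1)) \<longrightarrow>
    \<bar>u p s - emp_mean m (\<lambda>k p s. X k p s \<omega>) t p s\<bar> \<le> epsh t \<omega>"
  have "\<exists>G\<in>events. prob G \<ge> 1 - \<delta> \<and> (\<forall>\<omega>\<in>G. \<forall>j\<in>?J. ?dev_ok j \<omega>)"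
  proof (rule simultaneous_high_prob)
    show "finite ?J" "?J \<noteq> {}"
      using finite_indices[of Sp] indices_nonempty[of Sp] fin ne sched(1) by auto
    have "real (card ?J) = real (card (indices Sp)) * real T"
      by (simp add: card_cartesian_product)
    then show "\<exists>B\<in>events. prob B \<ge> 1 - \<delta> / real (card ?J) \<and> (\<forall>\<omega>\<in>B. ?dev_ok j \<omega>)"
      if "j \<in> ?J" for j
      using dev that by auto
  qed
  then obtain G where G: "G \<in> events" "prob G \<ge> 1 - \<delta>" "\<And>\<omega>. \<omega> \<in> G \<Longrightarrow> \<forall>j\<in>?J. ?dev_ok j \<omega>"
    by blast
  show ?thesis
  proof (intro bexI[OF _ G(1)] conjI G(2) ballI allI impI)
    fix \<omega> uh \<gamma>
    assume "\<omega> \<in> G" and out: "psreg Sp m T \<epsilon> \<gamma>s (\<lambda>k p s. X k p s \<omega>) (\<lambda>t. epsh t \<omega>) = Some uh"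
    note approx = psreg_approximates_equilibria[OF fin ne _ gs _ out]
    show "Eq Sp u 0 \<subseteq> Eq Sp uh (2 * \<epsilon>)"
      using G(3)[OF \<open>\<omega> \<in> G\<close>] eps by (intro approx(1)) (auto simp: indices_def)
    show "Eq Sp uh \<gamma> \<subseteq> Eq Sp u (2 * \<epsilon> + \<gamma>)" if "0 \<le> \<gamma> \<and> \<gamma> \<le> \<gamma>s"
      using G(3)[OF \<open>\<omega> \<in> G\<close>] eps that by (intro approx(2)) (auto simp: indices_def)
  qed
qed

end
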